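(* Let $K=\{x\in\mathbb R^n: g_1(x)=\dots=g_m(x)=0,\ p_1(x)\ge0,\dots,p_t(x)\ge0\}$ be nonempty, with $g_i,p_j$ real polynomials, and let $d\ge1$. (i) If $K$ is compact, then for $f\in\mathbb R[x]_{\le d}$: $\delta_K(f)>0\iff f\in\operatorname{int}P_d(K)$, and $\delta_K(f)=0\iff f\in\partial P_d(K)$. (ii) If $K^h$ is closed at $\infty$, then for $f\in\mathbb R[x]_{\le d}$: $\delta^h_K(f)>0\iff f\in\operatorname{int}P_d(K)$, and $\delta^h_K(f)=0\iff f\in\partial P_d(K)$.
   Context: $\mathbb R[x]_{\le d}$: real polynomials in $x=(x_1,\dots,x_n)$ of degree $\le d$, with Euclidean topology on coefficients. $P_d(K)=\{f\in\mathbb R[x]_{\le d}: f(x)\ge0\ \forall x\in K\}$. With $\tilde x=(x_0,\dots,x_n)$: $f^h(\tilde x)=x_0^df(x/x_0)$ for $f\in\mathbb R[x]_{\le d}$, and each $g_i^h$, $p_j^h$ is the homogenization of $g_i$, $p_j$ in its own degree ($q^h=x_0^{\deg q}q(x/x_0)$). $K^h=\{\tilde x\in\mathbb R^{n+1}: g_i^h(\tilde x)=0\ \forall i,\ p_j^h(\tilde x)\ge0\ \forall j\}$ (depending on the chosen defining polynomials); $K^h$ is closed at $\infty$ if $K^h\cap\{x_0\ge0\}$ equals the closure of $K^h\cap\{x_0>0\}$. $\delta_K(f)=\min_{x\in K}f(x)$ and $\delta^h_K(f)=\min\{f^h(\tilde x):\tilde x\in K^h,\ \|\tilde x\|_2=1,\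 x_0\ge0\}$. *)

theory Defs
  imports "HOL-Analysis.Analysis"
begin

text \<open>Multivariate real polynomials in n variables (n = CARD('n)) are represented by their
coefficient functions on exponent vectors (monomials) alpha :: 'n => nat.
Points of R^n are vectors real^'n; points of R^(n+1) are pairs (x0, x) :: real \<times> (real^'n)
(whose norm is the Euclidean norm of R^(n+1)).\<close>

type_synonym 'n rpoly = "('n \<Rightarrow> nat) \<Rightarrow> real"

definition mdeg :: "('n::finite \<Rightarrow> nat) \<Rightarrow> nat" where
  "mdeg \<alpha> = (\<Sum>i\<in>UNIV. \<alpha> i)"

definition mono :: "('n::finite \<Rightarrow> nat) \<Rightarrow> real^'n \<Rightarrow> real" where
  "mono \<alpha> x = (\<Prod>i\<in>UNIV. (x $ i) ^ (\<alpha> i))"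

definition supp :: "'n rpoly \<Rightarrow> ('n \<Rightarrow> nat) set" where
  "supp c = {\<alpha>. c \<alpha> \<noteq> 0}"

definition is_poly :: "'n rpoly \<Rightarrow> bool" where
  "is_poly c \<longleftrightarrow> finite (supp c)"

definition peval :: "('n::finite) rpoly \<Rightarrow> real^'n \<Rightarrow> real" where
  "peval c x = (\<Sum>\<alpha>\<in>supp c. c \<alpha> * mono \<alpha> x)"

text \<open>Total degree (the zero polynomial gets degree 0).\<close>
definition pdeg :: "('n::finite) rpoly \<Rightarrow> nat" where
  "pdeg c = Max (insert 0 (mdeg ` supp c))"

text \<open>Homogenization in degree D: x0^D * c(x/x0), as a polynomial in (x0,x).\<close>
definition homog :: "nat \<Rightarrow> ('n::finite) rpoly \<Rightarrow> real \<times> (real^'n) \<Rightarrow> real" where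
  "homog D c z = (\<Sum>\<alpha>\<in>supp c. c \<alpha> * (fst z) ^ (D - mdeg \<alpha>) * mono \<alpha> (snd z))"

text \<open>R[x]_{<= d} as a subset of the coefficient space (product = Euclidean topology on coefficients).\<close>
definition polys_le :: "nat \<Rightarrow> ('n::finite) rpoly set" where
  "polys_le d = {c. \<forall>\<alpha>. c \<alpha> \<noteq> 0 \<longrightarrow> mdeg \<alpha> \<le> d}"

definition Kset :: "('n::finite) rpoly list \<Rightarrow> 'n rpoly list \<Rightarrow> (real^'n) set" where
  "Kset gs ps = {x. (\<forall>g\<in>set gs. peval g x = 0) \<and> (\<forall>p\<in>set ps. peval p x \<ge> 0)}"

definition Khset :: "('n::finite) rpoly list \<Rightarrow> 'n rpoly list \<Rightarrow> (real \<times> (real^'n)) set" where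
  "Khset gs ps = {z. (\<forall>g\<in>set gs. homog (pdeg g) g z = 0) \<and> (\<forall>p\<in>set ps. homog (pdeg p) p z \<ge> 0)}"

definition closed_at_infinity :: "(real \<times> (real^'n)) set \<Rightarrow> bool" where
  "closed_at_infinity Kh \<longleftrightarrow> Kh \<inter> {z. fst z \<ge> 0} = closure (Kh \<inter> {z. fst z > 0})"

definition Pd :: "nat \<Rightarrow> (real^'n) set \<Rightarrow> ('n::finite) rpoly set" where
  "Pd d K = {c \<in> polys_le d. \<forall>x\<in>K. peval c x \<ge> 0}"

definition deltaK :: "(real^'n) set \<Rightarrow> ('n::finite) rpoly \<Rightarrow> real" where
  "deltaK K f = Inf (peval f ` K)"

definition deltaKh :: "('n::finite) rpoly list \<Rightarrow> 'n rpoly list \<Rightarrow> nat \<Rightarrow> 'n rpoly \<Rightarrow> real" where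
  "deltaKh gs ps d f = Inf (homog d f ` {z \<in> Khset gs ps. norm z = 1 \<and> fst z \<ge> 0})"

end

theory Submission
  imports Defs
begin

(* Both parts of the theorem are instances of one fact about finite-dimensional
   cones of nonnegative functions.  Fix a finite set A of "monomials" m_a, continuous on a
   compact nonempty set S, let P be the coefficient space (functions supported in A) and
   Q the cone of coefficient vectors c whose combination E_c = sum_a c_a m_a is >= 0 on S.
   Then min_S E_c > 0 iff c lies in the interior of Q relative to P, provided every point
   of S is strictly positive for some E_h; since Q is closed, min_S E_c = 0 iff c lies on
   its relative frontier.
   Part (i) is the instance A = exponents of degree <= d, m = monomials, S = K.
   Part (ii) uses the homogenized monomials x0^(d-|a|) x^a on the compact set
   S = K^h intersected with the unit sphere and {x0 >= 0}: closedness at infinity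
   transfers nonnegativity from K to S, scaling transfers it back, and the monomials
   1 (for x0 > 0) and x_i^d (for x0 = 0) provide the positivity witnesses. *)

section \<open>Cones of nonnegative linear combinations\<close>

definition lincomb :: "'a set \<Rightarrow> ('a \<Rightarrow> 'b \<Rightarrow> real) \<Rightarrow> ('a \<Rightarrow> real) \<Rightarrow> 'b \<Rightarrow> real" where
  "lincomb A m c s = (\<Sum>\<alpha>\<in>A. c \<alpha> * m \<alpha> s)"

definition coeff_space :: "'a set \<Rightarrow> ('a \<Rightarrow> real) set" where
  "coeff_space A = {c. \<forall>\<alpha>. c \<alpha> \<noteq> 0 \<longrightarrow> \<alpha> \<in> A}"

definition nonneg_cone :: "'a set \<Rightarrow> ('a \<Rightarrow> 'b \<Rightarrow> real) \<Rightarrow> 'b set \<Rightarrow> ('a \<Rightarrow> real) set" where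
  "nonneg_cone A m S = {c \<in> coeff_space A. \<forall>s\<in>S. 0 \<le> lincomb A m c s}"

lemma lincomb_continuous_on:
  assumes "\<And>\<alpha>. \<alpha> \<in> A \<Longrightarrow> continuous_on S (m \<alpha>)"
  shows "continuous_on S (lincomb A m c)"
  unfolding lincomb_def[abs_def] by (intro continuous_intros assms)

lemma lincomb_continuous_in_coeffs: "continuous_on UNIV (\<lambda>c. lincomb A m c s)"
  unfolding lincomb_def
  by (intro continuous_intros continuous_on_compose2[OF continuous_on_product_coordinates]) auto

lemma Inf_image_attained:
  fixes h :: "'b::topological_space \<Rightarrow> real"
  assumes "compact S" "S \<noteq> {}" "continuous_on S h"
  obtains s where "s \<in> S" "Inf (h ` S) = h s" "\<And>t. t \<in> S \<Longrightarrow> h s \<le> h t"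
proof -
  obtain s where s: "s \<in> S" "\<forall>t\<in>S. h s \<le> h t"
    using continuous_attains_inf[OF assms] by blast
  then have "Inf (h ` S) = h s" by (intro cInf_eq_minimum) auto
  with s that show thesis by blast
qed

lemma nonneg_cone_iff_Inf:
  fixes m :: "'a \<Rightarrow> 'b::topological_space \<Rightarrow> real"
  assumes S: "compact S" "S \<noteq> {}" and cont: "\<And>\<alpha>. \<alpha> \<in> A \<Longrightarrow> continuous_on S (m \<alpha>)"
    and c: "c \<in> coeff_space A"
  shows "c \<in> nonneg_cone A m S \<longleftrightarrow> 0 \<le> Inf (lincomb A m c ` S)"
proof -
  obtain s where s: "s \<in> S" "Inf (lincomb A m c ` S) = lincomb A m c s"
    "\<And>t. t \<in> S \<Longrightarrow> lincomb A m c s \<le> lincomb A m c t"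
    using Inf_image_attained[OF S lincomb_continuous_on[where m = m and c = c, OF cont]] by blast
  have "(\<forall>t\<in>S. 0 \<le> lincomb A m c t) \<longleftrightarrow> 0 \<le> lincomb A m c s"
    using s(1,3) order_trans by blast
  then show ?thesis using c s(2) unfolding nonneg_cone_def by simp
qed

text \<open>The cone is an intersection of closed half-spaces, hence relatively closed.\<close>
lemma closedin_nonneg_cone: "closedin (top_of_set (coeff_space A)) (nonneg_cone A m S)"
proof -
  have "nonneg_cone A m S = coeff_space A \<inter> (\<Inter>s\<in>S. {c. 0 \<le> lincomb A m c s})"
    unfolding nonneg_cone_def by auto
  moreover have "closed (\<Inter>s\<in>S. {c. 0 \<le> lincomb A m c s})"
    by (intro closed_INT ballI closed_Collect_le continuous_on_const lincomb_continuous_in_coeffs)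
  ultimately show ?thesis by (auto simp: closedin_closed)
qed

lemma lincomb_perturbation:
  assumes "\<And>\<alpha>. \<alpha> \<in> A \<Longrightarrow> \<bar>c' \<alpha> - c \<alpha>\<bar> \<le> \<eta>"
  shows "\<bar>lincomb A m c' s - lincomb A m c s\<bar> \<le> \<eta> * (\<Sum>\<alpha>\<in>A. \<bar>m \<alpha> s\<bar>)"
proof -
  have "\<bar>lincomb A m c' s - lincomb A m c s\<bar> = \<bar>\<Sum>\<alpha>\<in>A. (c' \<alpha> - c \<alpha>) * m \<alpha> s\<bar>"
    unfolding lincomb_def by (simp add: sum_subtractf[symmetric] algebra_simps)
  also have "\<dots> \<le> (\<Sum>\<alpha>\<in>A. \<bar>c' \<alpha> - c \<alpha>\<bar> * \<bar>m \<alpha> s\<bar>)"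
    by (rule order_trans[OF sum_abs]) (simp add: abs_mult)
  also have "\<dots> \<le> (\<Sum>\<alpha>\<in>A. \<eta> * \<bar>m \<alpha> s\<bar>)"
    by (intro sum_mono mult_right_mono assms) auto
  finally show ?thesis by (simp add: sum_distrib_left)
qed

text \<open>A strictly positive minimum survives small perturbations of the coefficients:
  such \<open>c\<close> is a relative interior point of the cone.\<close>
lemma interior_of_nonneg_cone_if_Inf_pos:
  fixes m :: "'a \<Rightarrow> 'b::topological_space \<Rightarrow> real"
  assumes fin: "finite A" and S: "compact S" "S \<noteq> {}"
    and cont: "\<And>\<alpha>. \<alpha> \<in> A \<Longrightarrow> continuous_on S (m \<alpha>)"
    and c: "c \<in> coeff_space A" and pos: "Inf (lincomb A m c ` S) > 0"
  shows "c \<in> top_of_set (coeff_space A) interior_of nonneg_cone A m S"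
proof -
  define \<delta> where "\<delta> = Inf (lincomb A m c ` S)"
  have \<delta>_le: "\<delta> \<le> lincomb A m c t" if "t \<in> S" for t
    using Inf_image_attained[OF S lincomb_continuous_on[where m = m and c = c, OF cont]] that
    unfolding \<delta>_def by metis
  have "compact ((\<lambda>s. \<Sum>\<alpha>\<in>A. \<bar>m \<alpha> s\<bar>) ` S)"
    by (intro compact_continuous_image S continuous_intros cont)
  then have "bounded ((\<lambda>s. \<Sum>\<alpha>\<in>A. \<bar>m \<alpha> s\<bar>) ` S)" by (rule compact_imp_bounded)
  then obtain B where "B > 0" "\<forall>y\<in>(\<lambda>s. \<Sum>\<alpha>\<in>A. \<bar>m \<alpha> s\<bar>) ` S. norm y \<le> B"
    by (auto simp: bounded_pos)
  then have B: "B > 0" "\<And>s. s \<in> S \<Longrightarrow> (\<Sum>\<alpha>\<in>A. \<bar>m \<alpha> s\<bar>) \<le> B" by auto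
  define \<eta> where "\<eta> = \<delta> / (2 * B)"
  have \<eta>: "\<eta> > 0" "\<eta> * B = \<delta> / 2" using pos B unfolding \<eta>_def \<delta>_def by auto
  define T where "T = (\<Inter>\<alpha>\<in>A. (\<lambda>c'. c' \<alpha>) -` ball (c \<alpha>) \<eta>)"
  have "open T" unfolding T_def
    by (intro open_INT fin ballI open_vimage open_ball) auto
  moreover have "c \<in> T" unfolding T_def using \<eta> by auto
  moreover have "coeff_space A \<inter> T \<subseteq> nonneg_cone A m S"
  proof
    fix c' assume c': "c' \<in> coeff_space A \<inter> T"
    have "0 \<le> lincomb A m c' s" if s: "s \<in> S" for s
    proof -
      have "\<bar>c' \<alpha> - c \<alpha>\<bar> \<le> \<eta>" if "\<alpha> \<in> A" for \<alpha>
        using c' that unfolding T_def by (auto simp: dist_real_def abs_minus_commute)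
      then have "\<bar>lincomb A m c' s - lincomb A m c s\<bar> \<le> \<eta> * (\<Sum>\<alpha>\<in>A. \<bar>m \<alpha> s\<bar>)"
        by (rule lincomb_perturbation)
      also have "\<dots> \<le> \<eta> * B" using B(2)[OF s] \<eta>(1) by (intro mult_left_mono) auto
      finally show ?thesis using \<delta>_le[OF s] \<eta>(2) pos unfolding \<delta>_def by linarith
    qed
    then show "c' \<in> nonneg_cone A m S" using c' by (auto simp: nonneg_cone_def)
  qed
  ultimately show ?thesis unfolding interior_of_def openin_open using c
    by (intro CollectI exI[of _ "coeff_space A \<inter> T"]) auto
qed

text \<open>Conversely, if \<open>E_c\<close> vanishes at \<open>s\<close> and \<open>E_h(s) > 0\<close>, then \<open>c - \<epsilon> h\<close> leaves the cone
  for every \<open>\<epsilon> > 0\<close>, so \<open>c\<close> is not a relative interior point.\<close>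
lemma Inf_pos_if_interior_of_nonneg_cone:
  fixes m :: "'a \<Rightarrow> 'b::topological_space \<Rightarrow> real"
  assumes S: "compact S" "S \<noteq> {}"
    and cont: "\<And>\<alpha>. \<alpha> \<in> A \<Longrightarrow> continuous_on S (m \<alpha>)"
    and witness: "\<And>s. s \<in> S \<Longrightarrow> \<exists>h\<in>coeff_space A. 0 < lincomb A m h s"
    and ci: "c \<in> top_of_set (coeff_space A) interior_of nonneg_cone A m S"
  shows "Inf (lincomb A m c ` S) > 0"
proof (rule ccontr)
  assume npos: "\<not> Inf (lincomb A m c ` S) > 0"
  obtain T where T: "open T" "c \<in> coeff_space A \<inter> T" "coeff_space A \<inter> T \<subseteq> nonneg_cone A m S"
    using ci unfolding interior_of_def openin_open by auto
  then have "0 \<le> Inf (lincomb A m c ` S)"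
    using nonneg_cone_iff_Inf[where m = m, OF S cont] by blast
  then have Inf0: "Inf (lincomb A m c ` S) = 0" using npos by linarith
  obtain s where "s \<in> S" "Inf (lincomb A m c ` S) = lincomb A m c s"
    using Inf_image_attained[OF S lincomb_continuous_on[where m = m and c = c, OF cont]] by blast
  with Inf0 have s: "s \<in> S" "lincomb A m c s = 0" by auto
  obtain h where h: "h \<in> coeff_space A" "0 < lincomb A m h s" using witness[OF s(1)] by blast
  define g where "g = (\<lambda>\<epsilon>::real. \<lambda>\<alpha>. c \<alpha> - \<epsilon> * h \<alpha>)"
  have "continuous_on UNIV g" unfolding g_def by (intro continuous_intros)
  then have "open (g -` T)" using T(1) by (simp add: continuous_on_open_vimage)
  moreover have "0 \<in> g -` T" using T(2) by (simp add: g_def)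
  ultimately obtain e where e: "e > 0" "ball 0 e \<subseteq> g -` T"
    using open_contains_ball by blast
  have "e/2 \<in> ball 0 e" using e(1) by simp
  then have "g (e/2) \<in> T" using e(2) by blast
  moreover have "g (e/2) \<in> coeff_space A"
    unfolding coeff_space_def g_def mem_Collect_eq
  proof (intro allI impI)
    fix \<alpha> assume "c \<alpha> - e / 2 * h \<alpha> \<noteq> 0"
    then have "c \<alpha> \<noteq> 0 \<or> h \<alpha> \<noteq> 0" by auto
    then show "\<alpha> \<in> A" using T(2) h(1) unfolding coeff_space_def by blast
  qed
  ultimately have "0 \<le> lincomb A m (g (e/2)) s"
    using T(3) s(1) by (auto simp: nonneg_cone_def)
  moreover have "lincomb A m (g (e/2)) s = lincomb A m c s - (e/2) * lincomb A m h s"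
    unfolding lincomb_def g_def by (simp add: sum_subtractf sum_distrib_left algebra_simps)
  moreover have "0 < (e/2) * lincomb A m h s" using h(2) e(1) by simp
  ultimately show False using s(2) by linarith
qed

theorem nonneg_cone_interior_frontier:
  fixes m :: "'a \<Rightarrow> 'b::topological_space \<Rightarrow> real"
  assumes fin: "finite A" and S: "compact S" "S \<noteq> {}"
    and cont: "\<And>\<alpha>. \<alpha> \<in> A \<Longrightarrow> continuous_on S (m \<alpha>)"
    and witness: "\<And>s. s \<in> S \<Longrightarrow> \<exists>h\<in>coeff_space A. 0 < lincomb A m h s"
    and c: "c \<in> coeff_space A"
  shows "(Inf (lincomb A m c ` S) > 0 \<longleftrightarrow> c \<in> top_of_set (coeff_space A) interior_of nonneg_cone A m S) \<and>
         (Inf (lincomb A m c ` S) = 0 \<longleftrightarrow> c \<in> top_of_set (coeff_space A) frontier_of nonneg_cone A m S)"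
proof -
  have int: "Inf (lincomb A m c ` S) > 0 \<longleftrightarrow> c \<in> top_of_set (coeff_space A) interior_of nonneg_cone A m S"
  proof
    show "c \<in> top_of_set (coeff_space A) interior_of nonneg_cone A m S"
      if "Inf (lincomb A m c ` S) > 0"
      by (rule interior_of_nonneg_cone_if_Inf_pos[where m = m, OF fin S cont c that])
    show "Inf (lincomb A m c ` S) > 0"
      if "c \<in> top_of_set (coeff_space A) interior_of nonneg_cone A m S"
      by (rule Inf_pos_if_interior_of_nonneg_cone[where m = m, OF S cont witness that])
  qed
  have "top_of_set (coeff_space A) frontier_of nonneg_cone A m S
        = nonneg_cone A m S - top_of_set (coeff_space A) interior_of nonneg_cone A m S"
    unfolding frontier_of_def using closure_of_closedin[OF closedin_nonneg_cone[of A m S]] by simp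
  moreover have "c \<in> nonneg_cone A m S \<longleftrightarrow> 0 \<le> Inf (lincomb A m c ` S)"
    by (rule nonneg_cone_iff_Inf[where m = m, OF S cont c])
  moreover have "Inf (lincomb A m c ` S) = 0 \<longleftrightarrow>
      0 \<le> Inf (lincomb A m c ` S) \<and> \<not> 0 < Inf (lincomb A m c ` S)" by auto
  ultimately show ?thesis using int by blast
qed

section \<open>Polynomials of bounded degree as linear combinations of monomials\<close>

definition exps_le :: "nat \<Rightarrow> ('n::finite \<Rightarrow> nat) set" where
  "exps_le d = {\<alpha>. mdeg \<alpha> \<le> d}"

lemma finite_exps_le: "finite (exps_le d :: ('n::finite \<Rightarrow> nat) set)"
proof (rule finite_subset[of _ "PiE UNIV (\<lambda>_. {0..d})"])
  show "exps_le d \<subseteq> PiE (UNIV :: 'n set) (\<lambda>_. {0..d})"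
  proof
    fix \<alpha> :: "'n \<Rightarrow> nat" assume \<alpha>: "\<alpha> \<in> exps_le d"
    have "\<alpha> i \<le> d" for i
    proof -
      have "\<alpha> i \<le> mdeg \<alpha>" unfolding mdeg_def by (rule member_le_sum) auto
      with \<alpha> show ?thesis unfolding exps_le_def by simp
    qed
    then show "\<alpha> \<in> PiE UNIV (\<lambda>_. {0..d})" by (simp add: PiE_iff)
  qed
qed (intro finite_PiE, auto)

lemma polys_le_eq_coeff_space: "polys_le d = coeff_space (exps_le d)"
  by (auto simp: polys_le_def coeff_space_def exps_le_def)

lemma supp_subset_exps_le: "c \<in> polys_le d \<Longrightarrow> supp c \<subseteq> exps_le d"
  by (auto simp: polys_le_def supp_def exps_le_def)

lemma peval_eq_lincomb: "c \<in> polys_le d \<Longrightarrow> peval c = lincomb (exps_le d) mono c"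
  unfolding peval_def[abs_def] lincomb_def[abs_def]
  by (intro ext sum.mono_neutral_left[OF finite_exps_le supp_subset_exps_le]) (auto simp: supp_def)

definition hmono :: "nat \<Rightarrow> ('n::finite \<Rightarrow> nat) \<Rightarrow> real \<times> (real^'n) \<Rightarrow> real" where
  "hmono d \<alpha> z = fst z ^ (d - mdeg \<alpha>) * mono \<alpha> (snd z)"

lemma homog_eq_lincomb: "c \<in> polys_le d \<Longrightarrow> homog d c = lincomb (exps_le d) (hmono d) c"
  unfolding homog_def[abs_def] lincomb_def[abs_def] hmono_def mult.assoc
  by (intro ext sum.mono_neutral_left[OF finite_exps_le supp_subset_exps_le]) (auto simp: supp_def)

lemma continuous_on_mono [continuous_intros]:
  "continuous_on S g \<Longrightarrow> continuous_on S (\<lambda>x. mono \<alpha> (g x))"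
  unfolding mono_def by (intro continuous_intros)

lemma continuous_on_hmono: "continuous_on S (hmono d \<alpha>)"
  unfolding hmono_def[abs_def] by (intro continuous_intros)

lemma continuous_on_homog: "continuous_on UNIV (homog D q)"
  unfolding homog_def[abs_def] by (intro continuous_intros)

lemma lincomb_single:
  assumes "finite A" "a \<in> A"
  shows "lincomb A m (\<lambda>\<alpha>. if \<alpha> = a then v else 0) s = v * m a s"
proof -
  have "lincomb A m (\<lambda>\<alpha>. if \<alpha> = a then v else 0) s = (\<Sum>\<alpha>\<in>A. if \<alpha> = a then v * m \<alpha> s else 0)"
    unfolding lincomb_def by (intro sum.cong) auto
  also have "\<dots> = v * m a s" using assms by (simp add: sum.delta)
  finally show ?thesis .
qed

lemma single_in_coeff_space: "a \<in> A \<Longrightarrow> (\<lambda>\<alpha>. if \<alpha> = a then v else 0) \<in> coeff_space A"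
  by (auto simp: coeff_space_def)

lemma mdeg_zero: "mdeg (\<lambda>_::'n::finite. 0) = 0"
  by (simp add: mdeg_def)

lemma mono_zero: "mono (\<lambda>_::'n::finite. 0) x = 1"
  by (simp add: mono_def)

lemma mdeg_single: "mdeg (\<lambda>j::'n::finite. if j = i then d else 0) = d"
  unfolding mdeg_def by (simp add: if_distrib cong: if_cong)

lemma mono_single: "mono (\<lambda>j. if j = i then d else 0) x = (x $ i) ^ d"
proof -
  have "mono (\<lambda>j. if j = i then d else 0) x = (\<Prod>j\<in>UNIV. if j = i then (x $ j) ^ d else 1)"
    unfolding mono_def by (intro prod.cong) auto
  also have "\<dots> = (x $ i) ^ d" by (subst prod.delta) auto
  finally show ?thesis .
qed

section \<open>Homogenization and the set \<open>K\<^sup>h\<close>\<close>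

text \<open>Every monomial of a polynomial has degree at most \<open>pdeg\<close>, so each defining polynomial
  is homogenized in a degree bounding its support.\<close>
lemma mdeg_le_pdeg: "is_poly q \<Longrightarrow> \<alpha> \<in> supp q \<Longrightarrow> mdeg \<alpha> \<le> pdeg q"
  unfolding pdeg_def is_poly_def by (intro Max_ge) auto

lemma mono_scale: "mono \<alpha> (t *\<^sub>R x) = t ^ mdeg \<alpha> * mono \<alpha> x"
  unfolding mono_def mdeg_def
  by (simp add: power_mult_distrib prod.distrib power_sum)

lemma homog_scale:
  assumes "\<forall>\<alpha>\<in>supp q. mdeg \<alpha> \<le> D"
  shows "homog D q (t *\<^sub>R z) = t ^ D * homog D q z"
proof -
  have "q \<alpha> * (t * fst z) ^ (D - mdeg \<alpha>) * mono \<alpha> (t *\<^sub>R snd z)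
      = t ^ D * (q \<alpha> * fst z ^ (D - mdeg \<alpha>) * mono \<alpha> (snd z))" if "\<alpha> \<in> supp q" for \<alpha>
  proof -
    have "t ^ (D - mdeg \<alpha>) * t ^ mdeg \<alpha> = t ^ D"
      using assms that by (simp add: power_add[symmetric])
    then show ?thesis by (simp add: mono_scale power_mult_distrib algebra_simps)
  qed
  then have "homog D q (t *\<^sub>R z)
      = (\<Sum>\<alpha>\<in>supp q. t ^ D * (q \<alpha> * fst z ^ (D - mdeg \<alpha>) * mono \<alpha> (snd z)))"
    unfolding homog_def by (intro sum.cong) auto
  then show ?thesis unfolding homog_def by (simp add: sum_distrib_left)
qed

lemma homog_one: "homog D q (1, x) = peval q x"
  by (simp add: homog_def peval_def)

lemma homog_pos:
  assumes "\<forall>\<alpha>\<in>supp q. mdeg \<alpha> \<le> D" and "fst z > 0"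
  shows "homog D q z = fst z ^ D * peval q (snd z /\<^sub>R fst z)"
proof -
  have "z = fst z *\<^sub>R (1, snd z /\<^sub>R fst z)" using assms(2) by (cases z) auto
  then have "homog D q z = homog D q (fst z *\<^sub>R (1, snd z /\<^sub>R fst z))" by simp
  also have "\<dots> = fst z ^ D * peval q (snd z /\<^sub>R fst z)"
    by (simp only: homog_scale[OF assms(1)] homog_one)
  finally show ?thesis .
qed

lemma Khset_dehomog:
  assumes gs: "\<forall>g\<in>set gs. is_poly g" and ps: "\<forall>p\<in>set ps. is_poly p"
    and z: "z \<in> Khset gs ps" and pos: "fst z > 0"
  shows "snd z /\<^sub>R fst z \<in> Kset gs ps"
proof -
  have hq: "homog (pdeg q) q z = fst z ^ pdeg q * peval q (snd z /\<^sub>R fst z)" if "is_poly q" for q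
    using that pos by (intro homog_pos) (auto intro: mdeg_le_pdeg)
  have "peval g (snd z /\<^sub>R fst z) = 0" if "g \<in> set gs" for g
    using z that hq[of g] gs pos by (auto simp: Khset_def)
  moreover have "peval p (snd z /\<^sub>R fst z) \<ge> 0" if "p \<in> set ps" for p
  proof -
    have "0 \<le> fst z ^ pdeg p * peval p (snd z /\<^sub>R fst z)"
      using z that hq[of p] ps by (auto simp: Khset_def)
    then show ?thesis using zero_less_power[OF pos] by (metis zero_le_mult_iff not_le)
  qed
  ultimately show ?thesis by (auto simp: Kset_def)
qed

lemma Kset_homog:
  assumes gs: "\<forall>g\<in>set gs. is_poly g" and ps: "\<forall>p\<in>set ps. is_poly p"
    and x: "x \<in> Kset gs ps" and t: "t > 0"
  shows "t *\<^sub>R (1, x) \<in> Khset gs ps"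
proof -
  have hq: "homog (pdeg q) q (t *\<^sub>R (1, x)) = t ^ pdeg q * peval q x" if "is_poly q" for q
    using that by (subst homog_scale) (auto intro: mdeg_le_pdeg simp: homog_one)
  show ?thesis using x t gs ps hq by (auto simp: Kset_def Khset_def)
qed

lemma closed_Khset: "closed (Khset gs ps)"
proof -
  have "Khset gs ps = (\<Inter>g\<in>set gs. {z. homog (pdeg g) g z = 0}) \<inter> (\<Inter>p\<in>set ps. {z. 0 \<le> homog (pdeg p) p z})"
    by (auto simp: Khset_def)
  moreover have "closed \<dots>"
    by (intro closed_Int closed_INT ballI closed_Collect_eq closed_Collect_le continuous_on_homog
        continuous_on_const)
  ultimately show ?thesis by simp
qed

definition Khsphere :: "('n::finite) rpoly list \<Rightarrow> 'n rpoly list \<Rightarrow> (real \<times> (real^'n)) set" where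
  "Khsphere gs ps = {z \<in> Khset gs ps. norm z = 1 \<and> fst z \<ge> 0}"

lemma compact_Khsphere: "compact (Khsphere gs ps)"
proof -
  have "Khsphere gs ps = Khset gs ps \<inter> sphere 0 1 \<inter> {z. 0 \<le> fst z}"
    unfolding Khsphere_def by auto
  moreover have "closed (Khset gs ps \<inter> sphere 0 1 \<inter> {z. 0 \<le> fst z})"
    by (intro closed_Int closed_Khset closed_sphere closed_Collect_le continuous_intros)
  ultimately show ?thesis
    by (simp add: compact_eq_bounded_closed bounded_Int bounded_sphere)
qed

lemma normalized_point_in_Khsphere:
  assumes "\<forall>g\<in>set gs. is_poly g" "\<forall>p\<in>set ps. is_poly p" and x: "x \<in> Kset gs ps"
  shows "(1 / norm (1::real, x)) *\<^sub>R (1, x) \<in> Khsphere gs ps"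
proof -
  have np: "norm (1::real, x) > 0" by (simp add: zero_prod_def)
  then have "norm ((1 / norm (1::real, x)) *\<^sub>R (1::real, x)) = 1"
    by (subst norm_scaleR) simp
  then show ?thesis
    using Kset_homog[OF assms] np unfolding Khsphere_def by simp
qed

text \<open>Nonnegativity on \<open>K\<close> is equivalent to nonnegativity of the homogenization on the
  sphere part of \<open>K\<^sup>h\<close>; the forward direction is where closedness at infinity is used.\<close>
lemma nonneg_on_K_iff_homog_nonneg:
  assumes gs: "\<forall>g\<in>set gs. is_poly g" and ps: "\<forall>p\<in>set ps. is_poly p"
    and cl: "closed_at_infinity (Khset gs ps)" and c: "c \<in> polys_le d"
  shows "(\<forall>x\<in>Kset gs ps. 0 \<le> peval c x) \<longleftrightarrow> (\<forall>z\<in>Khsphere gs ps. 0 \<le> homog d c z)"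
proof -
  have bnd: "\<forall>\<alpha>\<in>supp c. mdeg \<alpha> \<le> d" using supp_subset_exps_le[OF c] by (auto simp: exps_le_def)
  show ?thesis
  proof
    assume K: "\<forall>x\<in>Kset gs ps. 0 \<le> peval c x"
    have "Khset gs ps \<inter> {z. fst z > 0} \<subseteq> {z. 0 \<le> homog d c z}"
      using K Khset_dehomog[OF gs ps] by (auto simp: homog_pos[OF bnd])
    then have "closure (Khset gs ps \<inter> {z. fst z > 0}) \<subseteq> {z. 0 \<le> homog d c z}"
      by (intro closure_minimal closed_Collect_le continuous_on_homog continuous_on_const)
    then show "\<forall>z\<in>Khsphere gs ps. 0 \<le> homog d c z"
      using cl unfolding closed_at_infinity_def Khsphere_def by auto
  next
    assume H: "\<forall>z\<in>Khsphere gs ps. 0 \<le> homog d c z"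
    show "\<forall>x\<in>Kset gs ps. 0 \<le> peval c x"
    proof
      fix x assume x: "x \<in> Kset gs ps"
      define t where "t = 1 / norm (1::real, x)"
      have "t > 0" unfolding t_def by (simp add: zero_prod_def)
      moreover have "0 \<le> homog d c (t *\<^sub>R (1, x))"
        using H normalized_point_in_Khsphere[OF gs ps x] unfolding t_def by blast
      moreover have "homog d c (t *\<^sub>R (1, x)) = t ^ d * peval c x"
        by (simp only: homog_scale[OF bnd] homog_one)
      ultimately show "0 \<le> peval c x"
        using zero_less_power[OF \<open>t > 0\<close>, of d] by (metis zero_le_mult_iff not_le)
    qed
  qed
qed

text \<open>Every point of the sphere part of \<open>K\<^sup>h\<close> is strictly positive for some homogenized
  polynomial: the constant \<open>1\<close> if \<open>x\<^sub>0 > 0\<close>, and \<open>x\<^sub>i^d\<close> with \<open>x\<^sub>i \<noteq> 0\<close> if \<open>x\<^sub>0 = 0\<close>.\<close>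
lemma hmono_witness:
  fixes gs ps :: "('n::finite) rpoly list"
  assumes z: "z \<in> Khsphere gs ps"
  shows "\<exists>h\<in>coeff_space (exps_le d). 0 < lincomb (exps_le d) (hmono d) h z"
proof (cases "fst z > 0")
  case True
  let ?a = "\<lambda>_::'n. 0::nat"
  have a: "?a \<in> exps_le d" by (simp add: exps_le_def mdeg_zero)
  show ?thesis
  proof (rule bexI[OF _ single_in_coeff_space[OF a]])
    show "0 < lincomb (exps_le d) (hmono d) (\<lambda>\<alpha>. if \<alpha> = ?a then 1 else 0) z"
      using True by (simp add: lincomb_single[OF finite_exps_le a] hmono_def mdeg_zero mono_zero)
  qed
next
  case False
  then have "fst z = 0" using z unfolding Khsphere_def by auto
  moreover have "z \<noteq> 0" using z unfolding Khsphere_def by auto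
  ultimately have "snd z \<noteq> 0" by (auto simp: prod_eq_iff)
  then obtain i where i: "snd z $ i \<noteq> 0" by (auto simp: vec_eq_iff)
  let ?a = "\<lambda>j::'n. if j = i then d else 0"
  have a: "?a \<in> exps_le d" by (simp add: exps_le_def mdeg_single)
  show ?thesis
  proof (rule bexI[OF _ single_in_coeff_space[OF a]])
    have "(snd z $ i) ^ d \<noteq> 0" using i by simp
    then have "0 < (snd z $ i) ^ d * (snd z $ i) ^ d" by (metis not_real_square_gt_zero)
    then show "0 < lincomb (exps_le d) (hmono d) (\<lambda>\<alpha>. if \<alpha> = ?a then (snd z $ i) ^ d else 0) z"
      by (simp add: lincomb_single[OF finite_exps_le a] hmono_def mdeg_single mono_single)
  qed
qed

lemma interior_frontier_compact:
  fixes gs ps :: "('n::finite) rpoly list"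
  assumes cK: "compact (Kset gs ps)" and ne: "Kset gs ps \<noteq> {}" and f: "f \<in> polys_le d"
  shows "(deltaK (Kset gs ps) f > 0 \<longleftrightarrow>
            f \<in> top_of_set (polys_le d) interior_of Pd d (Kset gs ps)) \<and>
         (deltaK (Kset gs ps) f = 0 \<longleftrightarrow>
            f \<in> top_of_set (polys_le d) frontier_of Pd d (Kset gs ps))"
proof -
  let ?A = "exps_le d :: ('n::finite \<Rightarrow> nat) set"
  have Pd: "Pd d (Kset gs ps) = nonneg_cone ?A mono (Kset gs ps)"
    by (auto simp: Pd_def nonneg_cone_def polys_le_eq_coeff_space[symmetric] peval_eq_lincomb)
  have zero: "(\<lambda>_. 0) \<in> ?A" by (simp add: exps_le_def mdeg_zero)
  have witness: "\<exists>h\<in>coeff_space ?A. 0 < lincomb ?A mono h x" for x :: "real^'n"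
    by (intro bexI[OF _ single_in_coeff_space[OF zero, of 1]])
      (simp add: lincomb_single[OF finite_exps_le zero] mono_zero)
  have "continuous_on (Kset gs ps) (mono \<alpha>)" for \<alpha>
    using continuous_on_mono[OF continuous_on_id] by simp
  with f show ?thesis
    unfolding deltaK_def peval_eq_lincomb[OF f] Pd polys_le_eq_coeff_space
    by (intro nonneg_cone_interior_frontier[OF finite_exps_le cK ne _ witness])
qed

lemma interior_frontier_closed_at_infinity:
  fixes gs ps :: "('n::finite) rpoly list"
  assumes gs: "\<forall>g\<in>set gs. is_poly g" and ps: "\<forall>p\<in>set ps. is_poly p"
    and ne: "Kset gs ps \<noteq> {}" and cl: "closed_at_infinity (Khset gs ps)" and f: "f \<in> polys_le d"
  shows "(deltaKh gs ps d f > 0 \<longleftrightarrow>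
            f \<in> top_of_set (polys_le d) interior_of Pd d (Kset gs ps)) \<and>
         (deltaKh gs ps d f = 0 \<longleftrightarrow>
            f \<in> top_of_set (polys_le d) frontier_of Pd d (Kset gs ps))"
proof -
  let ?A = "exps_le d :: ('n::finite \<Rightarrow> nat) set"
  have Pd: "Pd d (Kset gs ps) = nonneg_cone ?A (hmono d) (Khsphere gs ps)"
    using nonneg_on_K_iff_homog_nonneg[OF gs ps cl]
    by (auto simp: Pd_def nonneg_cone_def polys_le_eq_coeff_space[symmetric] homog_eq_lincomb)
  have delta: "deltaKh gs ps d f = Inf (lincomb ?A (hmono d) f ` Khsphere gs ps)"
    unfolding deltaKh_def Khsphere_def homog_eq_lincomb[OF f] ..
  have "Khsphere gs ps \<noteq> {}" using ne normalized_point_in_Khsphere[OF gs ps] by blast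
  with f show ?thesis
    unfolding delta Pd polys_le_eq_coeff_space
    by (intro nonneg_cone_interior_frontier[OF finite_exps_le compact_Khsphere _
        continuous_on_hmono hmono_witness])
qed

theorem mainTheorem12:
  fixes gs ps :: "('n::finite) rpoly list" and d :: nat
  assumes "\<forall>g\<in>set gs. is_poly g" and "\<forall>p\<in>set ps. is_poly p"
    and "Kset gs ps \<noteq> {}" and "d \<ge> 1"
  shows "(compact (Kset gs ps) \<longrightarrow>
           (\<forall>f\<in>polys_le d.
              (deltaK (Kset gs ps) f > 0 \<longleftrightarrow>
                 f \<in> (top_of_set (polys_le d)) interior_of (Pd d (Kset gs ps))) \<and>
              (deltaK (Kset gs ps) f = 0 \<longleftrightarrow>
                 f \<in> (top_of_set (polys_le d)) frontier_of (Pd d (Kset gs ps)))))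
       \<and> (closed_at_infinity (Khset gs ps) \<longrightarrow>
           (\<forall>f\<in>polys_le d.
              (deltaKh gs ps d f > 0 \<longleftrightarrow>
                 f \<in> (top_of_set (polys_le d)) interior_of (Pd d (Kset gs ps))) \<and>
              (deltaKh gs ps d f = 0 \<longleftrightarrow>
                 f \<in> (top_of_set (polys_le d)) frontier_of (Pd d (Kset gs ps)))))"
  using interior_frontier_compact[OF _ assms(3)]
    interior_frontier_closed_at_infinity[OF assms(1-3)] by blast

end
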